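(* Let $G=(V(G),E(G),\ell)$ be an $n$-order node-labeled graph and $k\ge 2$. Then for all $t\ge 1$ there exist functions $g^{(0)},\dots,g^{(t)}\colon V(G)^k\to\mathbb{R}$, scalars $\beta_1,\dots,\beta_k$ and feed-forward networks $\mathsf{FFN}$ with $$g^{(s)}(\mathbf{u})=\mathsf{FFN}\Big(g^{(s-1)}(\mathbf{u})+\sum_{j\in[k]}\beta_j\sum_{w\in V(G)}g^{(s-1)}(\phi_j(\mathbf{u},w))\Big)\quad(1\le s\le t),$$ where $g^{(0)}$ is initialized consistently with the labels $\ell$ and the atomic types (i.e., $g^{(0)}(\mathbf{u})=g^{(0)}(\mathbf{v})\iff C^k_0(\mathbf{u})=C^k_0(\mathbf{v})$), such that for all $\mathbf{u},\mathbf{v}\in V(G)^k$, $$C^k_t(\mathbf{u})=C^k_t(\mathbf{v})\iff g^{(t)}(\mathbf{u})=g^{(t)}(\mathbf{v}).$$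
   Context: $\phi_j(\mathbf{v},w)=(v_1,\dots,v_{j-1},w,v_{j+1},\dots,v_k)$. $C^k_t$ is the $k$-WL coloring of $k$-tuples: $C^k_0(\mathbf{v})$ is determined by the atomic type of $\mathbf{v}$ (which pairs of entries are equal and which are adjacent) together with the labels $\ell(v_1),\dots,\ell(v_k)$, and $C^k_t(\mathbf{v})=\mathsf{RELABEL}\big(C^k_{t-1}(\mathbf{v}),(\{\!\{C^k_{t-1}(\phi_j(\mathbf{v},w))\mid w\in V(G)\}\!\})_{j=1}^k\big)$ with $\mathsf{RELABEL}$ injective into fresh natural numbers. $\mathsf{FFN}$ denotes a feed-forward (MLP) network. *)

theory Defs
  imports Complex_Main "HOL-Library.Multiset"
begin

text \<open>A k-tuple of vertices is a list of length k with entries in V.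
  Position j (0-based) of the list is the (j+1)-th entry of the tuple.\<close>
definition ktuples :: "'a set \<Rightarrow> nat \<Rightarrow> 'a list set" where
  "ktuples V k = {u. length u = k \<and> set u \<subseteq> V}"

text \<open>phi_j(v,w): replace the j-th entry of v by w (0-based): v[j := w].\<close>

text \<open>Colours are represented as free terms; the constructor Refine is an injective
  relabelling, so equality of colours is exactly equality under any injective RELABEL.\<close>
datatype 'l wlcol =
    Atom "bool list list" "bool list list" "'l list"
  | Refine "'l wlcol" "'l wlcol multiset list"

fun kwl :: "'a set \<Rightarrow> ('a \<Rightarrow> 'a \<Rightarrow> bool) \<Rightarrow> ('a \<Rightarrow> 'l) \<Rightarrow> nat \<Rightarrow> nat \<Rightarrow> 'a list \<Rightarrow> 'l wlcol" where
  "kwl V E lab k 0 v =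
     Atom (map (\<lambda>i. map (\<lambda>j. v ! i = v ! j) [0..<k]) [0..<k])
          (map (\<lambda>i. map (\<lambda>j. E (v ! i) (v ! j)) [0..<k]) [0..<k])
          (map lab v)"
| "kwl V E lab k (Suc t) v =
     Refine (kwl V E lab k t v)
            (map (\<lambda>j. image_mset (\<lambda>w. kwl V E lab k t (v[j := w])) (mset_set V)) [0..<k])"

definition relu :: "real \<Rightarrow> real" where
  "relu x = max 0 x"

definition affine :: "real list list \<Rightarrow> real list \<Rightarrow> real list \<Rightarrow> real list" where
  "affine W b x = map2 (\<lambda>row bi. sum_list (map2 (*) row x) + bi) W b"

fun mlp_eval :: "(real list list \<times> real list) list \<Rightarrow> real list \<Rightarrow> real list" where
  "mlp_eval [] x = x"
| "mlp_eval [(W, b)] x = affine W b x"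
| "mlp_eval ((W, b) # L) x = mlp_eval L (map relu (affine W b x))"

fun mlp_wf :: "nat \<Rightarrow> (real list list \<times> real list) list \<Rightarrow> nat \<Rightarrow> bool" where
  "mlp_wf d [] d' = (d = d')"
| "mlp_wf d ((W, b) # L) d' =
     (length W = length b \<and> (\<forall>r\<in>set W. length r = d) \<and> mlp_wf (length W) L d')"

definition is_FFN :: "(real \<Rightarrow> real) \<Rightarrow> bool" where
  "is_FFN f \<longleftrightarrow> (\<exists>L. L \<noteq> [] \<and> mlp_wf 1 L 1 \<and> (\<forall>x. f x = hd (mlp_eval L [x])))"

end

theory Submission
  imports Defs
begin

text \<open>Enumerate the finitely many k-WL colours of rounds 0, ..., t injectively by numbers
  c below K, and put g s u = N ^ c (C_s u) with N = k |V| + 2 and \<beta> j = N ^ (K (j + 1)).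
  The input of the s-th network is then a base-N number whose digits count the colour of u
  and, for each position j, the colours of the tuples u[j := w]. Every digit is below N, so this
  number determines the refined colour C_(s+1) u; and on the finitely many values that occur,
  any function is a ReLU network, namely a piecewise linear interpolation.\<close>

lemma is_FFN_relu_sum:
  fixes m :: nat
  shows "is_FFN (\<lambda>x. a + (\<Sum>i<m. c i * relu (x - p i)))"
proof -
  define L where "L = [(map (\<lambda>i. [1::real]) [0..<m], map (\<lambda>i. - p i) [0..<m]),
                       ([map c [0..<m]], [a])]"
  have hidden_layer: "affine (map (\<lambda>i. [1]) [0..<m]) (map (\<lambda>i. - p i) [0..<m]) [x]
                  = map (\<lambda>i. x - p i) [0..<m]" for x
    unfolding affine_def by (simp add: zip_map1 zip_map2 zip_same_conv_map o_def)
  have final_layer: "sum_list (map2 (*) (map c [0..<m]) (map relu (map (\<lambda>i. x - p i) [0..<m])))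
                  = (\<Sum>i<m. c i * relu (x - p i))" for x
    by (simp add: zip_map1 zip_map2 zip_same_conv_map o_def sum_list_sum_nth lessThan_atLeast0)
  have "mlp_wf 1 L 1" unfolding L_def by auto
  moreover have "hd (mlp_eval L [x]) = a + (\<Sum>i<m. c i * relu (x - p i))" for x
    unfolding L_def using hidden_layer final_layer by (simp add: affine_def)
  ultimately show ?thesis unfolding is_FFN_def by (intro exI[of _ L]) (simp add: L_def)
qed

lemma relu_sum_interpolation:
  fixes S :: "real set" and h :: "real \<Rightarrow> real"
  assumes "finite S"
  shows "\<exists>a (m :: nat) c p. \<forall>x\<in>S. h x = a + (\<Sum>i<m. c i * relu (x - p i))"
  using assms
proof (induction S rule: finite_linorder_max_induct)
  case empty
  then show ?case by auto
next
  case (insert b A)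
  show ?case
  proof (cases "A = {}")
    case True
    then show ?thesis by (intro exI[of _ "h b"] exI[of _ "0::nat"]) auto
  next
    case False
    obtain a c p and m :: nat where IH: "\<forall>x\<in>A. h x = a + (\<Sum>i<m. c i * relu (x - p i))"
      using insert.IH by blast
    define q where "q = Max A"
    have below_q: "x \<le> q" if "x \<in> A" for x using that insert.hyps(1) q_def by simp
    have "q < b" using insert.hyps False q_def by simp
    define f where "f x = a + (\<Sum>i<m. c i * relu (x - p i))" for x
    define c' where "c' = (h b - f b) / (b - q)"
    \<comment> \<open>A new hinge at q corrects the value at b without changing anything on A \<subseteq> {..q}.\<close>
    have "h x = a + (\<Sum>i<Suc m. (c(m := c')) i * relu (x - (p(m := q)) i))"
      if "x \<in> insert b A" for x
    proof -
      have "(\<Sum>i<Suc m. (c(m := c')) i * relu (x - (p(m := q)) i)) = f x - a + c' * relu (x - q)"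
        by (simp add: f_def)
      moreover have "relu (x - q) = 0" if "x \<in> A" using below_q[OF that] by (simp add: relu_def)
      moreover have "relu (b - q) = b - q" using \<open>q < b\<close> by (simp add: relu_def)
      ultimately show ?thesis using \<open>x \<in> insert b A\<close> IH \<open>q < b\<close> by (auto simp: c'_def f_def)
    qed
    then show ?thesis by blast
  qed
qed

lemma is_FFN_factorization:
  fixes \<phi> \<psi> :: "'a \<Rightarrow> real"
  assumes "finite A" and "\<And>u v. u \<in> A \<Longrightarrow> v \<in> A \<Longrightarrow> \<phi> u = \<phi> v \<Longrightarrow> \<psi> u = \<psi> v"
  shows "\<exists>f. is_FFN f \<and> (\<forall>u\<in>A. f (\<phi> u) = \<psi> u)"
proof -
  obtain a c p and m :: nat
    where interp: "\<forall>y\<in>\<phi> ` A. \<psi> (inv_into A \<phi> y) = a + (\<Sum>i<m. c i * relu (y - p i))"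
    using relu_sum_interpolation[of "\<phi> ` A" "\<psi> \<circ> inv_into A \<phi>"] assms(1) by auto
  have "\<psi> u = a + (\<Sum>i<m. c i * relu (\<phi> u - p i))" if "u \<in> A" for u
  proof -
    have "\<psi> (inv_into A \<phi> (\<phi> u)) = \<psi> u"
      using that by (intro assms(2) inv_into_into f_inv_into_f) auto
    then show ?thesis using interp that by auto
  qed
  then show ?thesis using is_FFN_relu_sum[where a = a and m = m and c = c and p = p] by auto
qed

lemma ex_FFN_layers:
  assumes "finite A"
    and "\<And>s u v. s < t \<Longrightarrow> u \<in> A \<Longrightarrow> v \<in> A \<Longrightarrow> x s u = x s v \<Longrightarrow> g (Suc s) u = g (Suc s) v"
  shows "\<exists>F. \<forall>s\<in>{1..t}. is_FFN (F s) \<and> (\<forall>u\<in>A. g s u = F s (x (s - 1) u))"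
proof -
  have "\<exists>f. is_FFN f \<and> (\<forall>u\<in>A. f (x (s - 1) u) = g s u)" if "s \<in> {1..t}" for s
  proof (rule is_FFN_factorization[OF assms(1)])
    fix u v assume "u \<in> A" "v \<in> A" "x (s - 1) u = x (s - 1) v"
    moreover have "s - 1 < t" "Suc (s - 1) = s" using that by auto
    ultimately show "g s u = g s v" using assms(2)[of "s - 1" u v] by simp
  qed
  then show ?thesis by metis
qed

lemma sum_digits_inject:
  fixes N :: nat and d e :: "nat \<Rightarrow> nat"
  assumes "\<forall>p<L. d p < N" and "\<forall>p<L. e p < N"
    and "(\<Sum>p<L. d p * N ^ p) = (\<Sum>p<L. e p * N ^ p)"
  shows "\<forall>p<L. d p = e p"
  using assms
proof (induction L arbitrary: d e)
  case 0
  then show ?case by simp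
next
  case (Suc L)
  have split: "(\<Sum>p<Suc L. f p * N ^ p) = f 0 + N * (\<Sum>p<L. f (Suc p) * N ^ p)" for f
    by (subst sum.lessThan_Suc_shift) (simp add: sum_distrib_left mult.assoc mult.left_commute)
  have digits: "d 0 < N" "e 0 < N" using Suc.prems by auto
  note sums = Suc.prems(3)[unfolded split]
  then have "d 0 = e 0" using digits by (metis mod_mult_self2 mod_less)
  with sums digits have tail: "(\<Sum>p<L. d (Suc p) * N ^ p) = (\<Sum>p<L. e (Suc p) * N ^ p)"
    by simp
  have "\<forall>p<L. d (Suc p) = e (Suc p)"
    using Suc.IH[OF _ _ tail] Suc.prems by simp
  with \<open>d 0 = e 0\<close> show ?case by (auto simp: less_Suc_eq_0_disj)
qed

lemma sum_mset_eq_sum_count: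
  fixes f :: "'a \<Rightarrow> nat"
  assumes "finite S" and "set_mset A \<subseteq> S"
  shows "(\<Sum>x\<in>#A. f x) = (\<Sum>x\<in>S. count A x * f x)"
  using assms(2)
proof (induction A)
  case empty
  then show ?case by simp
next
  case (add a A)
  have "(\<Sum>x\<in>S. count (add_mset a A) x * f x) = (\<Sum>x\<in>S. count A x * f x + (if x = a then f x else 0))"
    by (rule sum.cong) auto
  also have "\<dots> = (\<Sum>x\<in>S. count A x * f x) + f a"
    using add.prems assms(1) by (simp add: sum.distrib)
  finally show ?case using add by simp
qed

lemma sum_mset_image_sum: "(\<Sum>q\<in>#(\<Sum>j\<in>J. F j). f q) = (\<Sum>j\<in>J. \<Sum>q\<in>#F j. f q)"
  by (induction J rule: infinite_finite_induct) auto

lemma size_sum_mset: "size (\<Sum>j\<in>J. F j :: 'a multiset) = (\<Sum>j\<in>J. size (F j))"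
  by (induction J rule: infinite_finite_induct) auto

lemma sum_mset_power_inject:
  fixes N :: nat
  assumes "\<forall>p. count A p < N" and "\<forall>p. count B p < N"
    and "(\<Sum>p\<in>#A. N ^ p) = (\<Sum>p\<in>#B. N ^ p)"
  shows "A = B"
proof -
  obtain L where L: "set_mset A \<union> set_mset B \<subseteq> {..<L}"
    using finite_nat_set_iff_bounded[of "set_mset A \<union> set_mset B"] by auto
  then have "(\<Sum>p<L. count A p * N ^ p) = (\<Sum>p<L. count B p * N ^ p)"
    using assms(3) sum_mset_eq_sum_count[of "{..<L}"] by simp
  then have "\<forall>p<L. count A p = count B p"
    using sum_digits_inject assms(1,2) by blast
  moreover have "count A p = 0 \<and> count B p = 0" if "\<not> p < L" for p
    using L that by (auto simp: not_in_iff[symmetric])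
  ultimately show ?thesis by (metis multiset_eqI)
qed

definition tagged_mset :: "'c \<Rightarrow> (nat \<Rightarrow> 'c multiset) \<Rightarrow> nat \<Rightarrow> (nat \<times> 'c) multiset" where
  "tagged_mset x M k = add_mset (0, x) (\<Sum>j<k. image_mset (Pair (Suc j)) (M j))"

lemma tagged_mset_inject:
  fixes M M' :: "nat \<Rightarrow> 'c multiset"
  assumes "tagged_mset x M k = tagged_mset y M' k"
  shows "x = y \<and> (\<forall>j<k. M j = M' j)"
proof -
  define tag :: "nat \<Rightarrow> (nat \<times> 'c) multiset \<Rightarrow> 'c multiset"
    where "tag i T = image_mset snd (filter_mset (\<lambda>q. fst q = i) T)" for i T
  have tag_sum: "tag i (\<Sum>j<k. F j) = (\<Sum>j<k. tag i (F j))" for i F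
    using sum_comp_morphism[of "tag i" F "{..<k}"] by (simp add: tag_def o_def)
  have tag_add_mset: "tag i (add_mset (j, z) T) = (if i = j then add_mset z (tag i T) else tag i T)"
    for i j z T
    by (simp add: tag_def)
  have tag_Pair: "tag i (image_mset (Pair j) A) = (if i = j then A else {#})" for i j A
    by (simp add: tag_def filter_mset_image_mset multiset.map_comp o_def)
  have "tag 0 (tagged_mset x M k) = {#x#}" for x M
    unfolding tagged_mset_def tag_add_mset tag_sum tag_Pair by simp
  moreover have "tag (Suc j) (tagged_mset x M k) = M j" if "j < k" for j x M
    using that unfolding tagged_mset_def tag_add_mset tag_sum tag_Pair by (simp add: sum.delta)
  ultimately show ?thesis using assms by (metis single_eq_single)
qed

definition power_code :: "nat \<Rightarrow> nat \<Rightarrow> ('c \<Rightarrow> nat) \<Rightarrow> 'c \<Rightarrow> (nat \<Rightarrow> 'c multiset) \<Rightarrow> nat \<Rightarrow> nat" where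
  "power_code N K c x M k = N ^ c x + (\<Sum>j<k. N ^ (K * Suc j) * (\<Sum>z\<in>#M j. N ^ c z))"

text \<open>If c takes values below K, the element (i, z) of the tagged multiset contributes the
  base-N digit at position K * i + c z, and all digits stay below N; so the code determines the
  tagged multiset.\<close>

lemma power_code_inject:
  fixes c :: "'c \<Rightarrow> nat"
  assumes "inj_on c C" and "c ` C \<subseteq> {..<K}"
    and "x \<in> C" and "y \<in> C" and "\<forall>j<k. set_mset (M j) \<subseteq> C" and "\<forall>j<k. set_mset (M' j) \<subseteq> C"
    and "1 + (\<Sum>j<k. size (M j)) < N" and "1 + (\<Sum>j<k. size (M' j)) < N"
    and "power_code N K c x M k = power_code N K c y M' k"
  shows "x = y \<and> (\<forall>j<k. M j = M' j)"
proof -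
  define enc where "enc q = K * fst q + c (snd q)" for q
  have code: "power_code N K c x M k = (\<Sum>p\<in>#image_mset enc (tagged_mset x M k). N ^ p)" for x M
    by (simp add: power_code_def tagged_mset_def enc_def sum_mset_image_sum power_add
        sum_mset_distrib_left multiset.map_comp o_def)
  have digits: "count (image_mset enc (tagged_mset x M k)) p < N"
    if "1 + (\<Sum>j<k. size (M j)) < N" for x M p
    using that count_le_size[of "image_mset enc (tagged_mset x M k)" p]
    by (simp add: tagged_mset_def size_sum_mset)
  have enc_inj: "inj_on enc (UNIV \<times> C)"
  proof (rule inj_onI)
    fix q q' assume q: "q \<in> UNIV \<times> C" "q' \<in> UNIV \<times> C" and "enc q = enc q'"
    then have "c (snd q) < K" "c (snd q') < K" using assms(2) by auto
    then have "fst q = fst q'" "c (snd q) = c (snd q')"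
      using arg_cong[OF \<open>enc q = enc q'\<close>, of "\<lambda>n. n div K"]
        arg_cong[OF \<open>enc q = enc q'\<close>, of "\<lambda>n. n mod K"]
      by (simp_all add: enc_def)
    then show "q = q'" using q assms(1) by (auto dest: inj_onD intro: prod_eqI)
  qed
  have "image_mset enc (tagged_mset x M k) = image_mset enc (tagged_mset y M' k)"
    using sum_mset_power_inject digits assms(7-9) unfolding code by blast
  moreover have "set_mset (tagged_mset x M k) \<subseteq> UNIV \<times> C" "set_mset (tagged_mset y M' k) \<subseteq> UNIV \<times> C"
    using assms(3-6) by (auto simp: tagged_mset_def set_mset_sum)
  ultimately have "tagged_mset x M k = tagged_mset y M' k"
    using enc_inj by (intro multiset.inj_map_strong[of _ _ enc enc]) (auto dest: inj_onD)
  then show ?thesis by (rule tagged_mset_inject)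
qed

lemma ktuples_update: "u \<in> ktuples V k \<Longrightarrow> w \<in> V \<Longrightarrow> u[j := w] \<in> ktuples V k"
  unfolding ktuples_def using set_update_subset_insert by fastforce

lemma finite_ktuples: "finite V \<Longrightarrow> finite (ktuples V k)"
  unfolding ktuples_def using finite_lists_length_eq[of V k] by (simp add: conj_commute)

lemma kwl_Suc_eq_if_power_code_eq:
  assumes "inj_on c C" and "c ` C \<subseteq> {..<K}" and "k * card V + 1 < N"
    and "kwl V E lab k s ` ktuples V k \<subseteq> C" and "u \<in> ktuples V k" and "v \<in> ktuples V k"
    and "power_code N K c (kwl V E lab k s u) (\<lambda>j. {#kwl V E lab k s (u[j := w]). w \<in># mset_set V#}) k
       = power_code N K c (kwl V E lab k s v) (\<lambda>j. {#kwl V E lab k s (v[j := w]). w \<in># mset_set V#}) k"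
  shows "kwl V E lab k (Suc s) u = kwl V E lab k (Suc s) v"
proof -
  have "set_mset {#kwl V E lab k s (x[j := w]). w \<in># mset_set V#} \<subseteq> C"
    if "x \<in> ktuples V k" for x j
  proof (cases "finite V")
    case True
    then show ?thesis using assms(4) ktuples_update[OF that] by auto
  qed simp
  then have "kwl V E lab k s u = kwl V E lab k s v \<and>
      (\<forall>j<k. {#kwl V E lab k s (u[j := w]). w \<in># mset_set V#} = {#kwl V E lab k s (v[j := w]). w \<in># mset_set V#})"
    using assms(3-7) by (intro power_code_inject[OF assms(1,2)]) auto
  then show ?thesis by simp
qed

theorem propositionI2:
  fixes V :: "'a set" and E :: "'a \<Rightarrow> 'a \<Rightarrow> bool" and lab :: "'a \<Rightarrow> 'l"
    and k t :: nat
  assumes "finite V"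
    and "\<And>x y. E x y \<Longrightarrow> E y x"
    and "\<And>x. \<not> E x x"
    and "k \<ge> 2"
    and "t \<ge> 1"
  shows "\<exists>(g :: nat \<Rightarrow> 'a list \<Rightarrow> real) (\<beta> :: nat \<Rightarrow> real) (F :: nat \<Rightarrow> real \<Rightarrow> real).
           (\<forall>s\<in>{1..t}. is_FFN (F s)) \<and>
           (\<forall>s\<in>{1..t}. \<forall>u\<in>ktuples V k.
               g s u = F s (g (s - 1) u +
                 (\<Sum>j<k. \<beta> j * (\<Sum>w\<in>V. g (s - 1) (u[j := w]))))) \<and>
           (\<forall>u\<in>ktuples V k. \<forall>v\<in>ktuples V k.
               g 0 u = g 0 v \<longleftrightarrow> kwl V E lab k 0 u = kwl V E lab k 0 v) \<and>
           (\<forall>u\<in>ktuples V k. \<forall>v\<in>ktuples V k.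
               kwl V E lab k t u = kwl V E lab k t v \<longleftrightarrow> g t u = g t v)"
proof -
  let ?col = "kwl V E lab k"
  define C where "C = (\<lambda>(s, u). ?col s u) ` ({..t} \<times> ktuples V k)"
  have "finite C" unfolding C_def using finite_ktuples[OF assms(1)] by simp
  then obtain c where "bij_betw c C {..<card C}"
    using ex_bij_betw_finite_nat atLeast0LessThan by metis
  then have c_inj: "inj_on c C" and c_range: "c ` C \<subseteq> {..<card C}"
    by (auto simp: bij_betw_def)
  have colours: "?col s ` ktuples V k \<subseteq> C" if "s \<le> t" for s
    using that unfolding C_def by force
  define N :: nat where "N = k * card V + 2"
  then have N_bound: "k * card V + 1 < N" by simp
  define g where "g s u = real (N ^ c (?col s u))" for s u
  define \<beta> where "\<beta> j = real (N ^ (card C * Suc j))" for j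
  have real_power_code: "g s u + (\<Sum>j<k. \<beta> j * (\<Sum>w\<in>V. g s (u[j := w])))
      = real (power_code N (card C) c (?col s u) (\<lambda>j. {#?col s (u[j := w]). w \<in># mset_set V#}) k)"
    for s u
    by (simp add: power_code_def g_def \<beta>_def sum_unfold_sum_mset multiset.map_comp o_def)
  have g_eq_iff: "\<forall>u\<in>ktuples V k. \<forall>v\<in>ktuples V k. g s u = g s v \<longleftrightarrow> ?col s u = ?col s v"
    if "s \<le> t" for s
  proof -
    have "g s u = g s v \<longleftrightarrow> c (?col s u) = c (?col s v)" for u v
      unfolding g_def of_nat_eq_iff by (simp add: N_def power_inject_exp)
    then show ?thesis using colours[OF that] inj_on_eq_iff[OF c_inj] by blast
  qed
  have "\<exists>F. \<forall>s\<in>{1..t}. is_FFN (F s) \<and> (\<forall>u\<in>ktuples V k.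
          g s u = F s (g (s - 1) u + (\<Sum>j<k. \<beta> j * (\<Sum>w\<in>V. g (s - 1) (u[j := w])))))"
  proof (rule ex_FFN_layers[OF finite_ktuples[OF assms(1)]])
    fix s u v assume "s < t" "u \<in> ktuples V k" "v \<in> ktuples V k"
      and "g s u + (\<Sum>j<k. \<beta> j * (\<Sum>w\<in>V. g s (u[j := w])))
         = g s v + (\<Sum>j<k. \<beta> j * (\<Sum>w\<in>V. g s (v[j := w])))"
    then have "?col (Suc s) u = ?col (Suc s) v"
      unfolding real_power_code of_nat_eq_iff
      using \<open>s < t\<close> \<open>u \<in> _\<close> \<open>v \<in> _\<close>
      by (intro kwl_Suc_eq_if_power_code_eq[OF c_inj c_range N_bound colours]) auto
    then show "g (Suc s) u = g (Suc s) v" by (simp only: g_def)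
  qed
  with g_eq_iff show ?thesis by (intro exI[of _ g] exI[of _ \<beta>]) auto
qed

end
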